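(* Let $f$ be a non-negative monotone submodular function on the ground set $[m]=\{1,\dots,m\}$ (identified with a function on $\{0,1\}^m$ via indicator vectors), and let $F$ be its multilinear extension. Let $\mathbf{x}\in[0,1]^m$ satisfy $\sum_{i=1}^m x_i\le 1$, and let $\mathbf{e}_i\in\{0,1\}^m$ denote the $i$-th standard unit vector. Then $F(\mathbf{x})\le\sum_{i=1}^m x_i f(\mathbf{e}_i)+\left(1-\sum_{i=1}^m x_i\right)f(\mathbf{0})$.
   Context: The multilinear extension of $f$ is $F(\mathbf{x})=\sum_{T\subseteq[m]}\prod_{k\in T}x_k\prod_{k\notin T}(1-x_k)f(T)$ for $\mathbf{x}\in[0,1]^m$. $f$ submodular means $f(A\cup B)+f(A\cap B)\le f(A)+f(B)$ for all $A,B\subseteq[m]$; monotone means $f(A)\le f(B)$ for $A\subseteq B$. *)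

theory Defs
  imports Complex_Main
begin

definition submodular_on :: "nat \<Rightarrow> (nat set \<Rightarrow> real) \<Rightarrow> bool" where
  "submodular_on m f \<longleftrightarrow>
     (\<forall>A B. A \<subseteq> {1..m} \<longrightarrow> B \<subseteq> {1..m} \<longrightarrow> f (A \<union> B) + f (A \<inter> B) \<le> f A + f B)"

definition monotone_on_sets :: "nat \<Rightarrow> (nat set \<Rightarrow> real) \<Rightarrow> bool" where
  "monotone_on_sets m f \<longleftrightarrow> (\<forall>A B. A \<subseteq> B \<longrightarrow> B \<subseteq> {1..m} \<longrightarrow> f A \<le> f B)"

definition multilinear_ext :: "nat \<Rightarrow> (nat set \<Rightarrow> real) \<Rightarrow> (nat \<Rightarrow> real) \<Rightarrow> real" where
  "multilinear_ext m f x =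
     (\<Sum>T\<in>Pow {1..m}. (\<Prod>k\<in>T. x k) * (\<Prod>k\<in>{1..m} - T. 1 - x k) * f T)"

end

theory Submission
  imports Defs
begin

text \<open>The weight of \<open>T\<close> in the multilinear extension is the probability that the random set
  \<open>R \<subseteq> [m]\<close>, containing each \<open>i\<close> independently with probability \<open>x i\<close>, equals \<open>T\<close>; so
  \<open>F(x)\<close> is the expectation of \<open>f(R)\<close>. Submodularity bounds \<open>f(T)\<close> by the affine function
  \<open>f(\<emptyset>) + \<Sum>\<^sub>i\<^sub>\<in>\<^sub>T (f{i} - f(\<emptyset>))\<close>, whose expectation is
  \<open>f(\<emptyset>) + \<Sum>\<^sub>i x\<^sub>i (f{i} - f(\<emptyset>))\<close>, the right-hand side.\<close>

lemma submodular_on_le_singletons: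
  assumes submod: "submodular_on m f" and T: "T \<subseteq> {1..m}"
  shows "f T \<le> f {} + (\<Sum>i\<in>T. f {i} - f {})"
proof -
  have "finite T" using T finite_subset by blast
  then show ?thesis using T
  proof (induction T rule: finite_induct)
    case empty
    then show ?case by simp
  next
    case (insert i T)
    have "f (T \<union> {i}) + f (T \<inter> {i}) \<le> f T + f {i}"
      using submod[unfolded submodular_on_def, rule_format, of T "{i}"] insert.prems by simp
    moreover have "T \<inter> {i} = {}" using insert.hyps by auto
    ultimately have "f (insert i T) \<le> f T + f {i} - f {}" by simp
    with insert show ?case by simp
  qed
qed

definition product_weight :: "'a set \<Rightarrow> ('a \<Rightarrow> real) \<Rightarrow> 'a set \<Rightarrow> real" where
  "product_weight S x T = (\<Prod>k\<in>T. x k) * (\<Prod>k\<in>S - T. 1 - x k)"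

lemma multilinear_ext_eq_product_weight:
  "multilinear_ext m f x = (\<Sum>T\<in>Pow {1..m}. product_weight {1..m} x T * f T)"
  by (simp add: multilinear_ext_def product_weight_def)

lemma product_weight_nonneg:
  assumes "\<forall>k\<in>S. 0 \<le> x k \<and> x k \<le> 1" and "T \<subseteq> S"
  shows "0 \<le> product_weight S x T"
  unfolding product_weight_def using assms by (intro mult_nonneg_nonneg prod_nonneg) auto

lemma product_weight_insert_notin:
  assumes "finite S" "a \<notin> S" "T \<subseteq> S"
  shows "product_weight (insert a S) x T = (1 - x a) * product_weight S x T"
proof -
  have "insert a S - T = insert a (S - T)" "a \<notin> S - T" using assms by auto
  then show ?thesis using assms(1) by (simp add: product_weight_def)
qed

lemma product_weight_insert_in:
  assumes "finite S" "a \<notin> S" "T \<subseteq> S"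
  shows "product_weight (insert a S) x (insert a T) = x a * product_weight S x T"
proof -
  have "insert a S - insert a T = S - T" "a \<notin> T" "finite T"
    using assms finite_subset by auto
  then show ?thesis by (simp add: product_weight_def)
qed

lemma sum_Pow_insert:
  fixes g :: "'a set \<Rightarrow> 'b::comm_monoid_add"
  assumes "finite S" "a \<notin> S"
  shows "(\<Sum>T\<in>Pow (insert a S). g T) = (\<Sum>T\<in>Pow S. g T) + (\<Sum>T\<in>Pow S. g (insert a T))"
proof -
  have "inj_on (insert a) (Pow S)"
    using assms(2) by (auto intro!: inj_onI)
  then show ?thesis
    unfolding Pow_insert using assms
    by (subst sum.union_disjoint) (auto simp: sum.reindex)
qed

lemma sum_product_weight_affine:
  fixes x d :: "'a \<Rightarrow> real"
  assumes "finite S"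
  shows "(\<Sum>T\<in>Pow S. product_weight S x T * (c + (\<Sum>i\<in>T. d i))) = c + (\<Sum>i\<in>S. x i * d i)"
  using assms
proof (induction S arbitrary: c rule: finite_induct)
  case empty
  then show ?case by (simp add: product_weight_def)
next
  case (insert a S)
  have without_a: "(\<Sum>T\<in>Pow S. product_weight (insert a S) x T * (c + (\<Sum>i\<in>T. d i)))
      = (1 - x a) * (c + (\<Sum>i\<in>S. x i * d i))"
    using insert by (simp add: product_weight_insert_notin mult.assoc flip: sum_distrib_left)
  have insert_term: "product_weight (insert a S) x (insert a T) * (c + (\<Sum>i\<in>insert a T. d i))
      = x a * (product_weight S x T * ((c + d a) + (\<Sum>i\<in>T. d i)))" if "T \<in> Pow S" for T
  proof -
    have "a \<notin> T" "finite T" using that insert.hyps finite_subset by auto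
    then show ?thesis
      using that insert.hyps by (simp add: product_weight_insert_in algebra_simps)
  qed
  have with_a: "(\<Sum>T\<in>Pow S. product_weight (insert a S) x (insert a T) * (c + (\<Sum>i\<in>insert a T. d i)))
      = x a * ((c + d a) + (\<Sum>i\<in>S. x i * d i))"
  proof -
    have "(\<Sum>T\<in>Pow S. product_weight (insert a S) x (insert a T) * (c + (\<Sum>i\<in>insert a T. d i)))
        = (\<Sum>T\<in>Pow S. x a * (product_weight S x T * ((c + d a) + (\<Sum>i\<in>T. d i))))"
      using insert_term by (rule sum.cong[OF refl])
    also have "\<dots> = x a * ((c + d a) + (\<Sum>i\<in>S. x i * d i))"
      by (simp add: insert.IH flip: sum_distrib_left)
    finally show ?thesis .
  qed
  show ?case
    unfolding sum_Pow_insert[OF insert.hyps] without_a with_a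
    using insert.hyps by (simp add: algebra_simps)
qed

theorem lemma5:
  fixes m :: nat and f :: "nat set \<Rightarrow> real" and x :: "nat \<Rightarrow> real"
  assumes nonneg: "\<forall>A. A \<subseteq> {1..m} \<longrightarrow> 0 \<le> f A"
    and mono: "monotone_on_sets m f"
    and submod: "submodular_on m f"
    and x_range: "\<forall>i\<in>{1..m}. 0 \<le> x i \<and> x i \<le> 1"
    and x_sum: "(\<Sum>i=1..m. x i) \<le> 1"
  shows "multilinear_ext m f x \<le> (\<Sum>i=1..m. x i * f {i}) + (1 - (\<Sum>i=1..m. x i)) * f {}"
proof -
  let ?S = "{1..m}"
  have "multilinear_ext m f x = (\<Sum>T\<in>Pow ?S. product_weight ?S x T * f T)"
    by (rule multilinear_ext_eq_product_weight)
  also have "\<dots> \<le> (\<Sum>T\<in>Pow ?S. product_weight ?S x T * (f {} + (\<Sum>i\<in>T. f {i} - f {})))"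
    using x_range
    by (intro sum_mono mult_left_mono submodular_on_le_singletons[OF submod] product_weight_nonneg)
      auto
  also have "\<dots> = f {} + (\<Sum>i\<in>?S. x i * (f {i} - f {}))"
    by (rule sum_product_weight_affine) simp
  also have "\<dots> = (\<Sum>i=1..m. x i * f {i}) + (1 - (\<Sum>i=1..m. x i)) * f {}"
    by (simp add: right_diff_distrib sum_subtractf algebra_simps flip: sum_distrib_left sum_distrib_right)
  finally show ?thesis .
qed

end
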